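(* Let $r,s,t,a,b,c$ be real numbers with $t\neq0$, and let $M_{H,n}^{(3)}$, $M_{h,n}^{(3)}$ be the matrix sequences defined in the context. Then for all nonnegative integers $m,n$: (i) $M_{h,n}^{(3)}M_{h,m}^{(3)}=M_{h,m}^{(3)}M_{h,n}^{(3)}=M_{h,n+m}^{(3)}$; (ii) $M_{H,n}^{(3)}M_{H,m}^{(3)}=M_{H,m}^{(3)}M_{H,n}^{(3)}$; (iii) $M_{H,1}^{(3)}M_{h,n}^{(3)}=M_{H,n}^{(3)}M_{h,1}^{(3)}=M_{H,n+1}^{(3)}$; (iv) $M_{H,n}^{(3)}M_{h,1}^{(3)}=M_{h,1}^{(3)}M_{H,n}^{(3)}=M_{H,n+1}^{(3)}$; (v) $M_{h,n}^{(3)}M_{H,n+1}^{(3)}=M_{H,2n+1}^{(3)}$.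
   Context: The third-order Horadam matrix sequence is the sequence of $3\times3$ matrices defined by $M_{H,n+3}^{(3)}=rM_{H,n+2}^{(3)}+sM_{H,n+1}^{(3)}+tM_{H,n}^{(3)}$ ($n\ge0$) with $M_{H,0}^{(3)}=\begin{pmatrix} b & c-rb & ta\\ a & b-ra & c-rb-sa\\ \frac{1}{t}(c-rb-sa) & a-\frac{r}{t}(c-rb-sa) & \frac1t\big(-sc+(t+rs)b+(s^2-rt)a\big)\end{pmatrix}$, $M_{H,1}^{(3)}=\begin{pmatrix} c & sb+ta & tb\\ b & c-rb & ta\\ a & b-ra & c-rb-sa\end{pmatrix}$, $M_{H,2}^{(3)}=\begin{pmatrix} rc+sb+ta & sc+tb & tc\\ c & sb+ta & tb\\ b & c-rb & ta\end{pmatrix}$. The generalized Tribonacci matrix sequence satisfies the same recurrence with $M_{h,0}^{(3)}=I_3$, $M_{h,1}^{(3)}=\begin{pmatrix} r&s&t\\1&0&0\\0&1&0\end{pmatrix}$, $M_{h,2}^{(3)}=\begin{pmatrix} r^2+s&rs+t&rt\\ r&s&t\\ 1&0&0\end{pmatrix}$. *)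

theory Defs
  imports "HOL-Analysis.Analysis"
begin

fun MH :: "real \<Rightarrow> real \<Rightarrow> real \<Rightarrow> real \<Rightarrow> real \<Rightarrow> real \<Rightarrow> nat \<Rightarrow> real^3^3" where
  "MH r s t a b c 0 =
     vector [vector [b, c - r*b, t*a],
             vector [a, b - r*a, c - r*b - s*a],
             vector [(1/t)*(c - r*b - s*a), a - (r/t)*(c - r*b - s*a),
                     (1/t) * ((t + r* s)*b + (s^2 - r*t)*a - s*c)]]"
| "MH r s t a b c (Suc 0) =
     vector [vector [c, s*b + t*a, t*b],
             vector [b, c - r*b, t*a],
             vector [a, b - r*a, c - r*b - s*a]]"
| "MH r s t a b c (Suc (Suc 0)) =
     vector [vector [r*c + s*b + t*a, s*c + t*b, t*c],
             vector [c, s*b + t*a, t*b],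
             vector [b, c - r*b, t*a]]"
| "MH r s t a b c (Suc (Suc (Suc n))) =
     r *\<^sub>R MH r s t a b c (n + 2) + s *\<^sub>R MH r s t a b c (n + 1) + t *\<^sub>R MH r s t a b c n"

fun Mh :: "real \<Rightarrow> real \<Rightarrow> real \<Rightarrow> nat \<Rightarrow> real^3^3" where
  "Mh r s t 0 = mat 1"
| "Mh r s t (Suc 0) =
     vector [vector [r, s, t],
             vector [1, 0, 0],
             vector [0, 1, 0]]"
| "Mh r s t (Suc (Suc 0)) =
     vector [vector [r^2 + s, r* s + t, r*t],
             vector [r, s, t],
             vector [1, 0, 0]]"
| "Mh r s t (Suc (Suc (Suc n))) =
     r *\<^sub>R Mh r s t (n + 2) + s *\<^sub>R Mh r s t (n + 1) + t *\<^sub>R Mh r s t n"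

end

theory Submission
  imports Defs
begin

text \<open>Both sequences satisfy the same linear third-order recurrence, so an identity between
  two such sequences follows from its first three instances. This gives
  \<open>Mh (n + 1) = Mh n ** Mh 1\<close>, i.e. \<open>Mh n\<close> is the \<open>n\<close>-th power of \<open>Mh 1\<close>, and
  \<open>MH n = MH 0 ** Mh n\<close>; the latter needs \<open>t \<noteq> 0\<close> only because \<open>MH 0\<close> has entries divided
  by \<open>t\<close>. As \<open>MH 0\<close> commutes with \<open>Mh 1\<close>, all matrices involved lie in the commutative
  algebra generated by \<open>MH 0\<close> and \<open>Mh 1\<close>, and every claim reduces to adding indices.\<close>

definition third_order_recurrent :: "real \<Rightarrow> real \<Rightarrow> real \<Rightarrow> (nat \<Rightarrow> 'a::real_vector) \<Rightarrow> bool"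
  where "third_order_recurrent r s t X \<longleftrightarrow>
    (\<forall>n. X (Suc (Suc (Suc n))) = r *\<^sub>R X (Suc (Suc n)) + s *\<^sub>R X (Suc n) + t *\<^sub>R X n)"

lemma third_order_recurrent_eqI:
  assumes "third_order_recurrent r s t X" "third_order_recurrent r s t Y"
    and "X 0 = Y 0" "X 1 = Y 1" "X 2 = Y 2"
  shows "X n = Y n"
proof (induction n rule: less_induct)
  case (less n)
  show ?case
  proof (cases "n < 3")
    case True
    then have "n = 0 \<or> n = 1 \<or> n = 2" by auto
    with assms(3-5) show ?thesis by auto
  next
    case False
    then obtain k where n: "n = Suc (Suc (Suc k))"
      by (metis add_Suc_shift le_Suc_ex not_less numeral_3_eq_3 plus_nat.add_0)
    then have "X n = r *\<^sub>R X (Suc (Suc k)) + s *\<^sub>R X (Suc k) + t *\<^sub>R X k"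
      using assms(1) by (simp add: third_order_recurrent_def)
    also have "\<dots> = r *\<^sub>R Y (Suc (Suc k)) + s *\<^sub>R Y (Suc k) + t *\<^sub>R Y k"
      using less.IH n by simp
    also have "\<dots> = Y n"
      using assms(2) n by (simp add: third_order_recurrent_def)
    finally show ?thesis .
  qed
qed

lemma matrix_add_rdistrib: "(A + B) ** C = A ** C + B ** C"
  by (vector matrix_matrix_mult_def sum.distrib[symmetric] field_simps)

lemma third_order_recurrent_mult_right:
  fixes X :: "nat \<Rightarrow> real^'n^'m" and B :: "real^'k^'n"
  assumes "third_order_recurrent r s t X"
  shows "third_order_recurrent r s t (\<lambda>n. X n ** B)"
  using assms by (simp add: third_order_recurrent_def matrix_add_rdistrib scalar_matrix_assoc)

lemma third_order_recurrent_mult_left: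
  fixes X :: "nat \<Rightarrow> real^'k^'n" and A :: "real^'n^'m"
  assumes "third_order_recurrent r s t X"
  shows "third_order_recurrent r s t (\<lambda>n. A ** X n)"
  using assms
  by (simp add: third_order_recurrent_def matrix_add_ldistrib matrix_scalar_ac scalar_matrix_assoc)

lemma third_order_recurrent_Suc:
  assumes "third_order_recurrent r s t X"
  shows "third_order_recurrent r s t (\<lambda>n. X (Suc n))"
  using assms by (simp add: third_order_recurrent_def)

lemma third_order_recurrent_Mh: "third_order_recurrent r s t (Mh r s t)"
  by (simp add: third_order_recurrent_def)

lemma third_order_recurrent_MH: "third_order_recurrent r s t (MH r s t a b c)"
  by (simp add: third_order_recurrent_def)

lemmas matrix3_entries = vec_eq_iff forall_3 matrix_matrix_mult_def sum_3 mat_def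

lemma Mh_Suc: "Mh r s t (Suc n) = Mh r s t n ** Mh r s t 1"
proof (rule third_order_recurrent_eqI [OF third_order_recurrent_Suc third_order_recurrent_mult_right,
      OF third_order_recurrent_Mh third_order_recurrent_Mh])
  show "Mh r s t (Suc 2) = Mh r s t 2 ** Mh r s t 1"
    by (simp add: matrix3_entries numeral_2_eq_2 power2_eq_square algebra_simps)
qed (simp_all add: matrix3_entries numeral_2_eq_2 power2_eq_square)

lemma Mh_add: "Mh r s t n ** Mh r s t m = Mh r s t (n + m)"
proof (induction m)
  case 0
  show ?case by simp
next
  case (Suc m)
  have "Mh r s t n ** Mh r s t (Suc m) = (Mh r s t n ** Mh r s t m) ** Mh r s t 1"
    by (simp only: Mh_Suc [of r s t m] matrix_mul_assoc)
  also have "\<dots> = Mh r s t (n + Suc m)"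
    by (simp only: Suc.IH Mh_Suc [of r s t "n + m"] add_Suc_right)
  finally show ?case .
qed

lemma Mh_commute:
  assumes "A ** Mh r s t 1 = Mh r s t 1 ** A"
  shows "A ** Mh r s t n = Mh r s t n ** A"
proof (induction n)
  case 0
  show ?case by simp
next
  case (Suc n)
  have "A ** Mh r s t (Suc n) = (Mh r s t n ** A) ** Mh r s t 1"
    by (simp only: Mh_Suc [of r s t n] matrix_mul_assoc Suc.IH)
  also have "\<dots> = Mh r s t (Suc n) ** A"
    by (simp only: Mh_Suc [of r s t n] assms flip: matrix_mul_assoc)
  finally show ?case .
qed

lemma MH0_Mh1_commute:
  assumes "t \<noteq> 0"
  shows "MH r s t a b c 0 ** Mh r s t 1 = Mh r s t 1 ** MH r s t a b c 0"
  using assms by (simp add: matrix3_entries power2_eq_square field_simps)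

lemma MH0_mult_Mh:
  assumes "t \<noteq> 0"
  shows "MH r s t a b c 0 ** Mh r s t n = MH r s t a b c n"
proof (rule third_order_recurrent_eqI
    [OF third_order_recurrent_mult_left third_order_recurrent_MH, OF third_order_recurrent_Mh])
  show MH1: "MH r s t a b c 0 ** Mh r s t 1 = MH r s t a b c 1"
    using assms by (simp add: matrix3_entries power2_eq_square field_simps)
  have "MH r s t a b c 0 ** Mh r s t 2 = (MH r s t a b c 0 ** Mh r s t 1) ** Mh r s t 1"
    by (simp only: Mh_add one_add_one flip: matrix_mul_assoc)
  also have "\<dots> = MH r s t a b c 2"
    unfolding MH1 by (simp add: matrix3_entries numeral_2_eq_2 power2_eq_square algebra_simps)
  finally show "MH r s t a b c 0 ** Mh r s t 2 = MH r s t a b c 2" .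
qed simp

lemma MH_mult_Mh:
  assumes "t \<noteq> 0"
  shows "MH r s t a b c n ** Mh r s t m = MH r s t a b c (n + m)"
proof -
  have "MH r s t a b c n ** Mh r s t m = MH r s t a b c 0 ** (Mh r s t n ** Mh r s t m)"
    by (simp only: MH0_mult_Mh [OF assms, where n = n, symmetric] matrix_mul_assoc)
  then show ?thesis
    by (simp only: Mh_add MH0_mult_Mh [OF assms])
qed

lemma Mh_mult_MH:
  assumes "t \<noteq> 0"
  shows "Mh r s t m ** MH r s t a b c n = MH r s t a b c (m + n)"
proof -
  have "Mh r s t m ** MH r s t a b c n = (Mh r s t m ** MH r s t a b c 0) ** Mh r s t n"
    by (simp only: MH0_mult_Mh [OF assms, where n = n, symmetric] matrix_mul_assoc)
  also have "\<dots> = MH r s t a b c 0 ** (Mh r s t m ** Mh r s t n)"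
    by (simp only: Mh_commute [OF MH0_Mh1_commute [OF assms], symmetric] matrix_mul_assoc)
  finally show ?thesis
    by (simp only: MH0_mult_Mh [OF assms] Mh_add)
qed

lemma MH_mult_MH:
  assumes "t \<noteq> 0"
  shows "MH r s t a b c n ** MH r s t a b c m = MH r s t a b c 0 ** MH r s t a b c (n + m)"
proof -
  have "MH r s t a b c n ** MH r s t a b c m = MH r s t a b c 0 ** (Mh r s t n ** MH r s t a b c m)"
    by (simp only: MH0_mult_Mh [OF assms, where n = n, symmetric] matrix_mul_assoc)
  then show ?thesis
    by (simp only: Mh_mult_MH [OF assms])
qed

theorem lemma3p1:
  fixes r s t a b c :: real and m n :: nat
  assumes "t \<noteq> 0"
  shows "(Mh r s t n ** Mh r s t m = Mh r s t m ** Mh r s t n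
          \<and> Mh r s t m ** Mh r s t n = Mh r s t (n + m))
       \<and> MH r s t a b c n ** MH r s t a b c m = MH r s t a b c m ** MH r s t a b c n
       \<and> (MH r s t a b c 1 ** Mh r s t n = MH r s t a b c n ** Mh r s t 1
          \<and> MH r s t a b c n ** Mh r s t 1 = MH r s t a b c (n + 1))
       \<and> (MH r s t a b c n ** Mh r s t 1 = Mh r s t 1 ** MH r s t a b c n
          \<and> Mh r s t 1 ** MH r s t a b c n = MH r s t a b c (n + 1))
       \<and> Mh r s t n ** MH r s t a b c (n + 1) = MH r s t a b c (2 * n + 1)"
proof -
  have "MH r s t a b c n ** MH r s t a b c m = MH r s t a b c m ** MH r s t a b c n"
    by (simp only: MH_mult_MH [OF assms, where n = n] MH_mult_MH [OF assms, where n = m]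
        add.commute)
  moreover have "Mh r s t n ** MH r s t a b c (n + 1) = MH r s t a b c (2 * n + 1)"
    by (simp only: Mh_mult_MH [OF assms] mult_2 add.assoc)
  ultimately show ?thesis
    by (simp only: Mh_add MH_mult_Mh [OF assms] Mh_mult_MH [OF assms] add.commute [of m n]
        add.commute [of 1 n] simp_thms)
qed

end
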